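(* Let $\mathbf{X}=(X_n)_{n\ge0}$ be a second-order stationary process with spectral density $f_X$ on $[-\pi,\pi)$ having finitely many, $N_X\ge1$, singular frequencies. Let $k\ge1$ be an integer and $Y_n=X_{kn}$ (deterministic sampling), and let $N_Y$ be the number of singular frequencies of the spectral density $f_Y$ of $\mathbf{Y}$. Then (a) $1\le N_Y\le N_X$; (b) $N_Y<N_X$ if and only if $f_X$ has at least two singular frequencies $\lambda_0\ne\lambda_1$ such that $\lambda_0-\lambda_1=\frac{2\pi j^*}{k}$ for some integer $j^*$.
   Context: A singular frequency of a spectral density $f$ on $[-\pi,\pi)$ is a point $\lambda_0\in[-\pi,\pi)$ at which $f$ is unbounded (i.e. $f$ is unbounded on every neighbourhood of $\lambda_0$). For deterministic sampling with step $k$ the spectral density of $\mathbf{Y}$ is $f_Y(\lambda)=\frac{1}{2\ell+1}\sum_{j=-\ell}^{\ell}f_X\big(\frac{\lambda-2\pi j}{2\ell+1}\big)$ if $k=2\ell+1$, and $f_Y(\lambda)=\frac{1}{2\ell}\Big(\sum_{j=-\ell+1}^{\ell-1}f_X\big(\frac{\lambda-2\pi j}{2\ell}\big)+f_X\big(\frac{\lambda-2\pi\ell\,\mathrm{sgn}(\lambda)}{2\ell}\big)\Big)$ if $k=2\ell$. *)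

theory Defs
  imports "HOL-Analysis.Analysis"
begin

definition circ_near :: "real \<Rightarrow> real \<Rightarrow> real \<Rightarrow> bool" where
  "circ_near x0 \<epsilon> x \<longleftrightarrow> (\<exists>m::int. \<bar>x - x0 - 2 * pi * of_int m\<bar> < \<epsilon>)"

definition singular_freq :: "(real \<Rightarrow> real) \<Rightarrow> real \<Rightarrow> bool" where
  "singular_freq f x0 \<longleftrightarrow> x0 \<in> {-pi..<pi} \<and>
     (\<forall>\<epsilon>>0. \<not> (\<exists>B. \<forall>x\<in>{-pi..<pi}. circ_near x0 \<epsilon> x \<longrightarrow> \<bar>f x\<bar> \<le> B))"

definition singular_freqs :: "(real \<Rightarrow> real) \<Rightarrow> real set" where
  "singular_freqs f = {x. singular_freq f x}"

text \<open>Spectral density of the deterministically sampled process Y_n = X_(kn).\<close>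
definition sampled_density :: "nat \<Rightarrow> (real \<Rightarrow> real) \<Rightarrow> real \<Rightarrow> real" where
  "sampled_density k f x =
     (let l = int (k div 2) in
      if odd k then
        (1 / real k) * (\<Sum>j\<in>{-l..l}. f ((x - 2 * pi * of_int j) / real k))
      else
        (1 / real k) * ((\<Sum>j\<in>{-l+1..l-1}. f ((x - 2 * pi * of_int j) / real k))
                        + f ((x - 2 * pi * of_int l * sgn x) / real k)))"

end

theory Submission
  imports Defs
begin

text \<open>For \<open>x\<close> in \<open>[-pi,pi)\<close>, every term of \<open>k f\<^sub>Y(x)\<close> is a value of \<open>f\<^sub>X\<close> at one of the \<open>k\<close>
  points \<open>a \<in> [-pi,pi)\<close> with \<open>k a = x\<close> mod \<open>2 pi\<close> (the fibre of \<open>x\<close> under the \<open>k\<close>-fold covering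
  \<open>t \<mapsto> k t\<close> of the circle), and every such \<open>a \<noteq> -pi\<close> occurs as a term. Hence \<open>f\<^sub>Y\<close> stays
  bounded near \<open>\<mu>\<close> whenever \<open>f\<^sub>X\<close> is bounded near each of the finitely many points over \<open>\<mu>\<close>;
  conversely, as \<open>f\<^sub>X \<ge> 0\<close>, the single term \<open>f\<^sub>X(t) \<le> k f\<^sub>Y(k t mod 2 pi)\<close> carries a blow-up of
  \<open>f\<^sub>X\<close> at \<open>\<lambda>\<close> to one of \<open>f\<^sub>Y\<close> at \<open>k \<lambda> mod 2 pi\<close>. So the singular frequencies of \<open>f\<^sub>Y\<close> are
  exactly the images of those of \<open>f\<^sub>X\<close> under \<open>t \<mapsto> k t mod 2 pi\<close>, and the count drops precisely
  when two of them share an image, i.e. differ by a multiple of \<open>2 pi / k\<close>.\<close>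

definition wrap_angle :: "real \<Rightarrow> real" where
  "wrap_angle y = y - 2 * pi * of_int \<lfloor>(y + pi) / (2 * pi)\<rfloor>"

lemma wrap_angle_eq_frac: "wrap_angle y = 2 * pi * frac ((y + pi) / (2 * pi)) - pi"
  by (simp add: wrap_angle_def frac_def field_simps)

lemma wrap_angle_in_range: "wrap_angle y \<in> {-pi..<pi}"
  using frac_ge_0 frac_lt_1 by (simp add: wrap_angle_eq_frac)

lemma wrap_angle_shift: "\<exists>n::int. wrap_angle y = y - 2 * pi * of_int n"
  unfolding wrap_angle_def by blast

lemma wrap_angle_periodic: "wrap_angle (y + 2 * pi * of_int n) = wrap_angle y"
proof -
  have "(y + 2 * pi * of_int n + pi) / (2 * pi) = (y + pi) / (2 * pi) + of_int n"
    by (simp add: field_simps)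
  then show ?thesis
    by (simp add: wrap_angle_def algebra_simps)
qed

lemma wrap_angle_id: "x \<in> {-pi..<pi} \<Longrightarrow> wrap_angle x = x"
  by (simp add: wrap_angle_def floor_eq_iff field_simps)

lemma wrap_angle_eq_iff: "wrap_angle a = wrap_angle b \<longleftrightarrow> (\<exists>n::int. a - b = 2 * pi * of_int n)"
proof
  assume "wrap_angle a = wrap_angle b"
  moreover obtain n m where "wrap_angle a = a - 2 * pi * of_int n" "wrap_angle b = b - 2 * pi * of_int m"
    using wrap_angle_shift by metis
  ultimately have "a - b = 2 * pi * of_int (n - m)"
    by (simp add: algebra_simps)
  then show "\<exists>n::int. a - b = 2 * pi * of_int n" ..
next
  assume "\<exists>n::int. a - b = 2 * pi * of_int n"
  then obtain n where "a = b + 2 * pi * of_int n"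
    by (auto simp: algebra_simps)
  then show "wrap_angle a = wrap_angle b"
    by (simp add: wrap_angle_periodic)
qed

lemma wrap_angle_mult_eq_iff:
  assumes "k \<ge> 1"
  shows "wrap_angle (real k * x) = wrap_angle (real k * y)
           \<longleftrightarrow> (\<exists>j::int. x - y = 2 * pi * of_int j / real k)"
proof -
  have "real k * x - real k * y = 2 * pi * of_int j \<longleftrightarrow> x - y = 2 * pi * of_int j / real k" for j :: int
    using assms by (auto simp: field_simps)
  then show ?thesis
    unfolding wrap_angle_eq_iff by blast
qed

lemma circ_near_mono: "circ_near a e x \<Longrightarrow> e \<le> e' \<Longrightarrow> circ_near a e' x"
  unfolding circ_near_def using less_le_trans by blast

lemma circ_near_shift_iff:
  "circ_near (a - 2 * pi * of_int n) e (b - 2 * pi * of_int m) \<longleftrightarrow> circ_near a e b"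
proof -
  have shift: "b - 2 * pi * of_int m - (a - 2 * pi * of_int n) - 2 * pi * of_int p
        = b - a - 2 * pi * of_int (p + m - n)" for p :: int
    by (simp add: algebra_simps)
  show ?thesis
  proof
    assume "circ_near (a - 2 * pi * of_int n) e (b - 2 * pi * of_int m)"
    then show "circ_near a e b"
      unfolding circ_near_def shift by blast
  next
    assume "circ_near a e b"
    then obtain q :: int where "\<bar>b - a - 2 * pi * of_int q\<bar> < e"
      unfolding circ_near_def by blast
    then have "\<bar>b - 2 * pi * of_int m - (a - 2 * pi * of_int n) - 2 * pi * of_int (q - m + n)\<bar> < e"
      unfolding shift by simp
    then show "circ_near (a - 2 * pi * of_int n) e (b - 2 * pi * of_int m)"
      unfolding circ_near_def by blast
  qed
qed

lemma circ_near_wrap_angle_iff: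
  "circ_near (wrap_angle a) e (wrap_angle b) \<longleftrightarrow> circ_near a e b"
proof -
  obtain n m :: int where "wrap_angle a = a - 2 * pi * of_int n" "wrap_angle b = b - 2 * pi * of_int m"
    using wrap_angle_shift by metis
  then show ?thesis
    by (simp only: circ_near_shift_iff)
qed

lemma circ_near_mult:
  assumes "circ_near a e b" "k > 0"
  shows "circ_near (real k * a) (real k * e) (real k * b)"
proof -
  obtain m :: int where "\<bar>b - a - 2 * pi * of_int m\<bar> < e"
    using assms(1) unfolding circ_near_def by blast
  moreover have "real k * b - real k * a - 2 * pi * of_int (int k * m)
                 = real k * (b - a - 2 * pi * of_int m)"
    by (simp add: algebra_simps)
  ultimately have "\<bar>real k * b - real k * a - 2 * pi * of_int (int k * m)\<bar> < real k * e"
    using assms(2) by (simp add: abs_mult)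
  then show ?thesis
    unfolding circ_near_def by blast
qed

lemma locally_bounded_uniform:
  fixes f :: "real \<Rightarrow> real"
  assumes "finite C"
    and "\<And>t. t \<in> C \<Longrightarrow> \<exists>e>0. \<exists>B. \<forall>x\<in>S. circ_near t e x \<longrightarrow> \<bar>f x\<bar> \<le> B"
  shows "\<exists>e>0. \<exists>B. \<forall>t\<in>C. \<forall>x\<in>S. circ_near t e x \<longrightarrow> \<bar>f x\<bar> \<le> B"
  using assms
proof (induction C rule: finite_induct)
  case empty
  show ?case
    by (auto intro: exI[of _ 1])
next
  case (insert t C)
  obtain e1 B1 where e1: "e1 > 0" and B1: "\<forall>s\<in>C. \<forall>x\<in>S. circ_near s e1 x \<longrightarrow> \<bar>f x\<bar> \<le> B1"
    using insert by blast
  obtain e2 B2 where e2: "e2 > 0" and B2: "\<forall>x\<in>S. circ_near t e2 x \<longrightarrow> \<bar>f x\<bar> \<le> B2"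
    using insert.prems by blast
  have "\<forall>s\<in>insert t C. \<forall>x\<in>S. circ_near s (min e1 e2) x \<longrightarrow> \<bar>f x\<bar> \<le> max B1 B2"
    using B1 B2 circ_near_mono
    by (metis (no_types, lifting) insert_iff le_max_iff_disj min.cobounded1 min.cobounded2)
  then show ?case
    using e1 e2 by (metis min_less_iff_conj)
qed

definition scale_fibre :: "nat \<Rightarrow> real \<Rightarrow> real set" where
  "scale_fibre k \<mu> = {t \<in> {-pi..<pi}. \<exists>i::int. real k * t = \<mu> + 2 * pi * of_int i}"

lemma finite_scale_fibre:
  assumes "k \<ge> 1"
  shows "finite (scale_fibre k \<mu>)"
proof -
  have "scale_fibre k \<mu> \<subseteq> (\<lambda>r. wrap_angle ((\<mu> + 2 * pi * of_int r) / real k)) ` {0..<int k}"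
  proof
    fix t assume "t \<in> scale_fibre k \<mu>"
    then obtain i :: int where t: "t \<in> {-pi..<pi}" and ti: "real k * t = \<mu> + 2 * pi * of_int i"
      unfolding scale_fibre_def by blast
    define r where "r = i mod int k"
    define q where "q = i div int k"
    have "i = r + int k * q"
      by (simp add: r_def q_def)
    with ti assms have "t = (\<mu> + 2 * pi * of_int r) / real k + 2 * pi * of_int q"
      by (simp add: field_simps)
    then have "t = wrap_angle ((\<mu> + 2 * pi * of_int r) / real k)"
      using wrap_angle_id[OF t] by (simp add: wrap_angle_periodic)
    moreover have "r \<in> {0..<int k}"
      using assms by (simp add: r_def)
    ultimately show "t \<in> (\<lambda>r. wrap_angle ((\<mu> + 2 * pi * of_int r) / real k)) ` {0..<int k}"
      by blast
  qed
  then show ?thesis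
    by (rule finite_subset) simp
qed

lemma circ_near_scale_fibre:
  assumes "k \<ge> 1" "circ_near \<mu> (real k * e) x" "a \<in> scale_fibre k x"
  shows "\<exists>c \<in> scale_fibre k \<mu>. circ_near c e a"
proof -
  obtain m :: int where m: "\<bar>x - \<mu> - 2 * pi * of_int m\<bar> < real k * e"
    using assms(2) unfolding circ_near_def by blast
  obtain i :: int where a: "a \<in> {-pi..<pi}" "real k * a = x + 2 * pi * of_int i"
    using assms(3) unfolding scale_fibre_def by blast
  define y where "y = (\<mu> + 2 * pi * of_int (m + i)) / real k"
  have ky: "real k * y = \<mu> + 2 * pi * of_int (m + i)"
    using assms(1) by (simp add: y_def)
  obtain n :: int where n: "wrap_angle y = y - 2 * pi * of_int n"
    using wrap_angle_shift by blast
  have "real k * wrap_angle y = real k * y - 2 * pi * of_int (int k * n)"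
    unfolding n by (simp add: algebra_simps)
  also have "\<dots> = \<mu> + 2 * pi * of_int (m + i - int k * n)"
    using ky by (simp add: algebra_simps)
  finally have "real k * wrap_angle y = \<mu> + 2 * pi * of_int (m + i - int k * n)" .
  then have c: "wrap_angle y \<in> scale_fibre k \<mu>"
    unfolding scale_fibre_def using wrap_angle_in_range by blast
  have "real k * (a - y) = x - \<mu> - 2 * pi * of_int m"
    using a(2) ky by (simp add: algebra_simps)
  with m have "real k * \<bar>a - y\<bar> < real k * e"
    by (simp add: abs_mult)
  with assms(1) have "\<bar>a - y - 2 * pi * of_int 0\<bar> < e"
    by simp
  then have "circ_near y e a"
    unfolding circ_near_def by blast
  then have "circ_near (wrap_angle y) e a"
    using circ_near_wrap_angle_iff[of y e a] wrap_angle_id[OF a(1)] by simp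
  with c show ?thesis ..
qed

lemma divide_mem_scale_fibre:
  assumes "k > 0" "- (pi * real k) \<le> x - 2 * pi * of_int j" "x - 2 * pi * of_int j < pi * real k"
  shows "(x - 2 * pi * of_int j) / real k \<in> scale_fibre k x"
proof -
  have "(x - 2 * pi * of_int j) / real k \<in> {-pi..<pi}"
    using assms by (simp add: field_simps)
  moreover have "real k * ((x - 2 * pi * of_int j) / real k) = x + 2 * pi * of_int (- j)"
    using assms(1) by simp
  ultimately show ?thesis
    unfolding scale_fibre_def by blast
qed

lemma sampled_arg_in_scale_fibre:
  assumes x: "x \<in> {-pi..<pi}" and j: "2 * \<bar>j\<bar> + 1 \<le> int k"
  shows "(x - 2 * pi * of_int j) / real k \<in> scale_fibre k x"
proof (rule divide_mem_scale_fibre)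
  have "2 * \<bar>of_int j\<bar> + 1 \<le> real k"
    using j by linarith
  from mult_left_mono[OF this, of pi] have "2 * pi * \<bar>of_int j\<bar> + pi \<le> pi * real k"
    using pi_gt_zero by (simp add: algebra_simps)
  moreover have "\<bar>2 * pi * of_int j\<bar> = 2 * pi * \<bar>of_int j\<bar>"
    by (simp add: abs_mult)
  ultimately show "- (pi * real k) \<le> x - 2 * pi * of_int j" "x - 2 * pi * of_int j < pi * real k"
    using x by (auto simp: abs_le_iff)
  show "k > 0"
    using j by simp
qed

lemma sampled_sgn_arg_in_scale_fibre:
  assumes x: "x \<in> {-pi..<pi}" and l: "int k = 2 * l" "l \<ge> 1"
  shows "(x - 2 * pi * of_int l * sgn x) / real k \<in> scale_fibre k x"
proof -
  have "real k = 2 * of_int l"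
    using arg_cong[OF l(1), of real_of_int] by simp
  then have k: "k > 0" and kl: "pi * real k = 2 * pi * of_int l"
    using l(2) by auto
  have l_ge: "2 * pi \<le> 2 * pi * of_int l"
    using l(2) by simp
  have x_lo: "-pi \<le> x" and x_hi: "x < pi"
    using x by auto
  consider "x > 0" | "x < 0" | "x = 0"
    by linarith
  then show ?thesis
  proof cases
    case 1
    have "- (pi * real k) \<le> x - 2 * pi * of_int l" "x - 2 * pi * of_int l < pi * real k"
      using 1 x_hi kl l_ge pi_gt_zero by linarith+
    from divide_mem_scale_fibre[OF k this] show ?thesis
      using 1 by simp
  next
    case 2
    have e: "x - 2 * pi * of_int (- l) = x + 2 * pi * of_int l"
      by simp
    have "- (pi * real k) \<le> x - 2 * pi * of_int (- l)" "x - 2 * pi * of_int (- l) < pi * real k"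
      unfolding e using 2 x_lo kl l_ge by linarith+
    from divide_mem_scale_fibre[OF k this] show ?thesis
      using 2 by simp
  next
    case 3
    then show ?thesis
      using sampled_arg_in_scale_fibre[of x 0 k] x k by simp
  qed
qed

lemma sampled_density_odd:
  assumes "odd k"
  shows "real k * sampled_density k f x
           = (\<Sum>j\<in>{-int (k div 2)..int (k div 2)}. f ((x - 2 * pi * of_int j) / real k))"
  using assms by (auto simp: sampled_density_def Let_def elim: oddE)

lemma sampled_density_even:
  assumes "even k" "k \<ge> 1"
  shows "real k * sampled_density k f x
           = (\<Sum>j\<in>{-int (k div 2)+1..int (k div 2)-1}. f ((x - 2 * pi * of_int j) / real k))
             + f ((x - 2 * pi * of_int (int (k div 2)) * sgn x) / real k)"
  using assms by (simp add: sampled_density_def Let_def)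

lemma abs_sum_sampled_args_le:
  fixes f :: "real \<Rightarrow> real"
  assumes x: "x \<in> {-pi..<pi}" and B: "\<And>a. a \<in> scale_fibre k x \<Longrightarrow> \<bar>f a\<bar> \<le> B"
    and J: "\<And>j. j \<in> J \<Longrightarrow> 2 * \<bar>j\<bar> + 1 \<le> int k"
  shows "\<bar>\<Sum>j\<in>J. f ((x - 2 * pi * of_int j) / real k)\<bar> \<le> of_nat (card J) * B"
  using sum_abs
proof (rule order_trans)
  show "(\<Sum>j\<in>J. \<bar>f ((x - 2 * pi * of_int j) / real k)\<bar>) \<le> of_nat (card J) * B"
    using B[OF sampled_arg_in_scale_fibre[OF x J]] by (rule sum_bounded_above)
qed

lemma abs_sampled_density_le:
  assumes k: "k \<ge> 1" and x: "x \<in> {-pi..<pi}"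
    and B: "\<And>a. a \<in> scale_fibre k x \<Longrightarrow> \<bar>f a\<bar> \<le> B"
  shows "\<bar>sampled_density k f x\<bar> \<le> B"
proof -
  define l where "l = int (k div 2)"
  have "\<bar>real k * sampled_density k f x\<bar> \<le> real k * B"
  proof (cases "odd k")
    case True
    then have "int k = 2 * l + 1"
      unfolding l_def by presburger
    then have card: "card {-l..l} = k" and range: "\<And>j. j \<in> {-l..l} \<Longrightarrow> 2 * \<bar>j\<bar> + 1 \<le> int k"
      by (simp_all add: abs_le_iff)
    have "\<bar>\<Sum>j\<in>{-l..l}. f ((x - 2 * pi * of_int j) / real k)\<bar> \<le> real k * B"
      using abs_sum_sampled_args_le[where f = f and J = "{-l..l}", OF x B range] unfolding card .
    then show ?thesis
      unfolding sampled_density_odd[OF True] l_def .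
  next
    case False
    then have kl: "int k = 2 * l" "l \<ge> 1"
      using k unfolding l_def by presburger+
    let ?S = "\<Sum>j\<in>{-l+1..l-1}. f ((x - 2 * pi * of_int j) / real k)"
    let ?T = "f ((x - 2 * pi * of_int l * sgn x) / real k)"
    have card: "card {-l+1..l-1} = k - 1"
      and range: "\<And>j. j \<in> {-l+1..l-1} \<Longrightarrow> 2 * \<bar>j\<bar> + 1 \<le> int k"
      using kl by (auto simp: abs_if)
    have "\<bar>real k * sampled_density k f x\<bar> = \<bar>?S + ?T\<bar>"
      using sampled_density_even[of k f x] False k by (simp add: l_def)
    also have "\<dots> \<le> \<bar>?S\<bar> + \<bar>?T\<bar>"
      by (rule abs_triangle_ineq)
    also have "\<dots> \<le> (real k - 1) * B + B"
    proof (rule add_mono)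
      show "\<bar>?S\<bar> \<le> (real k - 1) * B"
        using abs_sum_sampled_args_le[where f = f and J = "{-l+1..l-1}", OF x B range] k
        unfolding card by (simp add: of_nat_diff)
      show "\<bar>?T\<bar> \<le> B"
        using B sampled_sgn_arg_in_scale_fibre[OF x kl] by blast
    qed
    finally show ?thesis
      by (simp add: algebra_simps)
  qed
  then show ?thesis
    using k by (simp add: abs_mult)
qed

lemma wrap_angle_mult_shift_bound:
  assumes k: "k > 0" and t: "t \<in> {-pi<..<pi}"
    and a: "wrap_angle (real k * t) = real k * t - 2 * pi * of_int a"
  shows "2 * \<bar>a\<bar> \<le> int k"
proof -
  have "-pi \<le> real k * t - 2 * pi * of_int a" "real k * t - 2 * pi * of_int a < pi"
    using wrap_angle_in_range[of "real k * t"] unfolding a by auto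
  moreover have "\<bar>real k * t\<bar> < real k * pi"
  proof -
    have "\<bar>t\<bar> < pi"
      using t by auto
    from mult_strict_left_mono[OF this, of "real k"] show ?thesis
      using k by (simp add: abs_mult)
  qed
  ultimately have "\<bar>2 * pi * of_int a\<bar> < real k * pi + pi"
    by (simp add: abs_less_iff)
  then have "pi * (2 * \<bar>of_int a\<bar>) < pi * (real k + 1)"
    by (simp add: abs_mult algebra_simps)
  then have "2 * \<bar>of_int a\<bar> < real k + 1"
    using pi_gt_zero mult_less_cancel_left_pos by blast
  then show ?thesis
    by linarith
qed

lemma sampled_sgn_arg_eq:
  assumes l: "int k = 2 * l" "l \<ge> 1" and t: "t \<in> {-pi<..<pi}"
    and x: "x = real k * t - 2 * pi * of_int a" and a: "\<bar>a\<bar> = l"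
  shows "(x - 2 * pi * of_int l * sgn x) / real k = t"
proof -
  have kpi: "real k * pi = 2 * pi * of_int l"
    using arg_cong[OF l(1), of real_of_int] by simp
  have k: "k > 0"
    using l by linarith
  have "real k * t < real k * pi" "real k * (- pi) < real k * t"
    using mult_strict_left_mono[of t pi "real k"] mult_strict_left_mono[of "- pi" t "real k"] t k
    by auto
  from a consider "a = l" | "a = - l"
    by linarith
  then have "of_int l * sgn x = - of_int a"
  proof cases
    case 1
    then have "x < 0"
      using x[unfolded 1] kpi \<open>real k * t < real k * pi\<close> by linarith
    with 1 show ?thesis
      by simp
  next
    case 2
    then have "x = real k * t + 2 * pi * of_int l"
      using x by simp
    then have "x > 0"
      using kpi \<open>real k * (- pi) < real k * t\<close> by linarith
    with 2 show ?thesis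
      by simp
  qed
  then have "x - 2 * pi * of_int l * sgn x = real k * t"
    using x by (simp add: mult.assoc)
  then show ?thesis
    using k by simp
qed

lemma sampled_arg_le_sampled_density:
  assumes nonneg: "\<forall>x\<in>{-pi..<pi}. f x \<ge> 0" and x: "x \<in> {-pi..<pi}"
    and j: "2 * \<bar>j\<bar> + 1 \<le> int k"
  shows "f ((x - 2 * pi * of_int j) / real k) \<le> real k * sampled_density k f x"
proof -
  define l where "l = int (k div 2)"
  let ?g = "\<lambda>j. f ((x - 2 * pi * of_int j) / real k)"
  have g_nonneg: "0 \<le> ?g i" if "2 * \<bar>i\<bar> + 1 \<le> int k" for i
    using nonneg sampled_arg_in_scale_fibre[OF x that] unfolding scale_fibre_def by blast
  have g_le_sum: "?g j \<le> sum ?g J"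
    if "finite J" "j \<in> J" "\<And>i. i \<in> J \<Longrightarrow> 2 * \<bar>i\<bar> + 1 \<le> int k" for J
    using member_le_sum[OF that(2), of ?g] g_nonneg that(1,3) by blast
  show ?thesis
  proof (cases "odd k")
    case True
    then have "int k = 2 * l + 1"
      unfolding l_def by presburger
    then have "j \<in> {-l..l}" "\<And>i. i \<in> {-l..l} \<Longrightarrow> 2 * \<bar>i\<bar> + 1 \<le> int k"
      using j by (auto simp: abs_if split: if_splits)
    then show ?thesis
      using g_le_sum[of "{-l..l}"] sampled_density_odd[OF True, of f x] unfolding l_def by simp
  next
    case False
    then have ev: "even k" and k: "k \<ge> 1" and kl: "int k = 2 * l" "l \<ge> 1"
      using j unfolding l_def by presburger+
    have "j \<in> {-l+1..l-1}" and range: "\<And>i. i \<in> {-l+1..l-1} \<Longrightarrow> 2 * \<bar>i\<bar> + 1 \<le> int k"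
      using j kl by (auto simp: abs_if split: if_splits)
    then have "?g j \<le> sum ?g {-l+1..l-1}"
      by (intro g_le_sum) simp_all
    moreover have "0 \<le> f ((x - 2 * pi * of_int l * sgn x) / real k)"
      using nonneg sampled_sgn_arg_in_scale_fibre[OF x kl] unfolding scale_fibre_def by blast
    ultimately show ?thesis
      using sampled_density_even[OF ev k, of f x] unfolding l_def by linarith
  qed
qed

lemma sampled_sgn_arg_le_sampled_density:
  assumes nonneg: "\<forall>x\<in>{-pi..<pi}. f x \<ge> 0" and x: "x \<in> {-pi..<pi}"
    and k: "even k" "k \<ge> 1"
  shows "f ((x - 2 * pi * of_int (int (k div 2)) * sgn x) / real k) \<le> real k * sampled_density k f x"
proof -
  define l where "l = int (k div 2)"
  have "int k = 2 * l"
    using k(1) unfolding l_def by presburger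
  then have "2 * \<bar>j\<bar> + 1 \<le> int k" if "j \<in> {-l+1..l-1}" for j
    using that by (auto simp: abs_if)
  then have "0 \<le> f ((x - 2 * pi * of_int j) / real k)" if "j \<in> {-l+1..l-1}" for j
    using that nonneg sampled_arg_in_scale_fibre[OF x] unfolding scale_fibre_def by blast
  then show ?thesis
    unfolding l_def
    using sampled_density_even[OF k, of f x] sum_nonneg by (metis le_add_same_cancel2)
qed

lemma sampled_density_lower_bound:
  assumes nonneg: "\<forall>x\<in>{-pi..<pi}. f x \<ge> 0" and k: "k \<ge> 1" and t: "t \<in> {-pi<..<pi}"
  shows "f t \<le> real k * sampled_density k f (wrap_angle (real k * t))"
proof -
  define x where "x = wrap_angle (real k * t)"
  obtain a :: int where xa: "x = real k * t - 2 * pi * of_int a"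
    using wrap_angle_shift unfolding x_def by blast
  have x: "x \<in> {-pi..<pi}"
    unfolding x_def by (rule wrap_angle_in_range)
  have a: "2 * \<bar>a\<bar> \<le> int k"
    using wrap_angle_mult_shift_bound[OF _ t] xa k unfolding x_def by simp
  show ?thesis
  proof (cases "2 * \<bar>- a\<bar> + 1 \<le> int k")
    case True
    have "f ((x - 2 * pi * of_int (- a)) / real k) = f t"
      using xa k by simp
    then show ?thesis
      using sampled_arg_le_sampled_density[OF nonneg x True] unfolding x_def by simp
  next
    case False
    then have ka: "int k = 2 * \<bar>a\<bar>"
      using a by simp
    then have l: "int (k div 2) = \<bar>a\<bar>"
      by (simp add: zdiv_int)
    have "even k"
      using ka by (metis dvd_triv_left even_of_nat)
    moreover have "int k = 2 * int (k div 2)" "int (k div 2) \<ge> 1"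
      using ka l k by simp_all
    ultimately show ?thesis
      using sampled_sgn_arg_eq[OF _ _ t xa l[symmetric]] sampled_sgn_arg_le_sampled_density[OF nonneg x _ k]
      unfolding x_def by simp
  qed
qed

lemma singular_freq_sampled_density:
  assumes nonneg: "\<forall>x\<in>{-pi..<pi}. f x \<ge> 0" and k: "k \<ge> 1" and sing: "singular_freq f \<omega>"
  shows "singular_freq (sampled_density k f) (wrap_angle (real k * \<omega>))"
  unfolding singular_freq_def
proof (intro conjI allI impI notI)
  show "wrap_angle (real k * \<omega>) \<in> {-pi..<pi}"
    by (rule wrap_angle_in_range)
  fix e :: real
  assume e: "e > 0"
  assume "\<exists>B. \<forall>x\<in>{-pi..<pi}.
            circ_near (wrap_angle (real k * \<omega>)) e x \<longrightarrow> \<bar>sampled_density k f x\<bar> \<le> B"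
  then obtain B where B: "\<And>x. x \<in> {-pi..<pi} \<Longrightarrow>
      circ_near (wrap_angle (real k * \<omega>)) e x \<Longrightarrow> \<bar>sampled_density k f x\<bar> \<le> B"
    by blast
  have "e / real k > 0"
    using e k by simp
  \<comment> \<open>The lower bound fails at \<open>t = -pi\<close> (for even \<open>k\<close> the term at \<open>-pi\<close> is replaced
    by \<open>f 0\<close>), so \<open>t\<close> is also taken to exceed \<open>\<bar>f (-pi)\<bar>\<close>.\<close>
  then obtain t where t: "t \<in> {-pi..<pi}" "circ_near \<omega> (e / real k) t"
    and big: "\<not> \<bar>f t\<bar> \<le> max (real k * B) \<bar>f (-pi)\<bar>"
    using sing unfolding singular_freq_def by blast
  then have t_open: "t \<in> {-pi<..<pi}"
    by (cases "t = -pi") auto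
  have "circ_near (real k * \<omega>) e (real k * t)"
    using circ_near_mult[OF t(2), of k] k by simp
  then have "\<bar>sampled_density k f (wrap_angle (real k * t))\<bar> \<le> B"
    using B wrap_angle_in_range circ_near_wrap_angle_iff by blast
  then have "real k * sampled_density k f (wrap_angle (real k * t)) \<le> real k * B"
    by (simp add: mult_left_mono)
  moreover have "real k * B < f t"
    using big nonneg t(1) by auto
  ultimately show False
    using sampled_density_lower_bound[OF nonneg k t_open] by linarith
qed

lemma singular_freq_sampled_density_source:
  assumes k: "k \<ge> 1" and sing: "singular_freq (sampled_density k f) \<mu>"
  shows "\<exists>t. singular_freq f t \<and> wrap_angle (real k * t) = \<mu>"
proof (rule ccontr)
  assume no_source: "\<nexists>t. singular_freq f t \<and> wrap_angle (real k * t) = \<mu>"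
  have \<mu>: "\<mu> \<in> {-pi..<pi}"
    using sing unfolding singular_freq_def by blast
  have "\<exists>e>0. \<exists>B. \<forall>x\<in>{-pi..<pi}. circ_near c e x \<longrightarrow> \<bar>f x\<bar> \<le> B"
    if c: "c \<in> scale_fibre k \<mu>" for c
  proof -
    obtain i :: int where "c \<in> {-pi..<pi}" "real k * c = \<mu> + 2 * pi * of_int i"
      using c unfolding scale_fibre_def by blast
    moreover from this have "wrap_angle (real k * c) = \<mu>"
      using wrap_angle_periodic wrap_angle_id[OF \<mu>] by simp
    ultimately show ?thesis
      using no_source unfolding singular_freq_def by blast
  qed
  then obtain e B where e: "e > 0"
    and B: "\<forall>c\<in>scale_fibre k \<mu>. \<forall>x\<in>{-pi..<pi}. circ_near c e x \<longrightarrow> \<bar>f x\<bar> \<le> B"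
    using locally_bounded_uniform[OF finite_scale_fibre[OF k]] by blast
  have "\<bar>sampled_density k f x\<bar> \<le> B"
    if x: "x \<in> {-pi..<pi}" and near: "circ_near \<mu> (real k * e) x" for x
  proof (rule abs_sampled_density_le[OF k x])
    fix a
    assume a: "a \<in> scale_fibre k x"
    then obtain c where "c \<in> scale_fibre k \<mu>" "circ_near c e a"
      using circ_near_scale_fibre[OF k near] by blast
    with a B show "\<bar>f a\<bar> \<le> B"
      unfolding scale_fibre_def by blast
  qed
  moreover have "real k * e > 0"
    using k e by simp
  ultimately show False
    using sing unfolding singular_freq_def by blast
qed

lemma singular_freqs_sampled_density:
  assumes "\<forall>x\<in>{-pi..<pi}. f x \<ge> 0" "k \<ge> 1"
  shows "singular_freqs (sampled_density k f) = (\<lambda>t. wrap_angle (real k * t)) ` singular_freqs f"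
  using singular_freq_sampled_density[OF assms] singular_freq_sampled_density_source[OF assms(2)]
  unfolding singular_freqs_def by blast

lemma inj_on_iff_card_image_less:
  "finite A \<Longrightarrow> card (f ` A) < card A \<longleftrightarrow> \<not> inj_on f A"
  by (metis card_image_le inj_on_iff_eq_card order_less_le)

theorem proposition4p2:
  fixes fX :: "real \<Rightarrow> real" and k :: nat
  assumes nonneg: "\<forall>x\<in>{-pi..<pi}. fX x \<ge> 0"
    and integrable: "set_integrable lborel {-pi..<pi} fX"
    and fin: "finite (singular_freqs fX)"
    and NX: "card (singular_freqs fX) \<ge> 1"
    and k: "k \<ge> 1"
  shows "(finite (singular_freqs (sampled_density k fX))
         \<and> 1 \<le> card (singular_freqs (sampled_density k fX))
         \<and> card (singular_freqs (sampled_density k fX)) \<le> card (singular_freqs fX))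
         \<and> (card (singular_freqs (sampled_density k fX)) < card (singular_freqs fX) \<longleftrightarrow>
         (\<exists>x0 x1. x0 \<in> singular_freqs fX \<and> x1 \<in> singular_freqs fX \<and> x0 \<noteq> x1 \<and>
            (\<exists>j::int. x0 - x1 = 2 * pi * of_int j / real k)))"
proof -
  define S where "S = singular_freqs fX"
  define \<phi> where "\<phi> t = wrap_angle (real k * t)" for t
  have SY: "singular_freqs (sampled_density k fX) = \<phi> ` S"
    unfolding S_def \<phi>_def by (rule singular_freqs_sampled_density[OF nonneg k])
  have "S \<noteq> {}"
    using NX by (auto simp: S_def)
  with fin have "finite (\<phi> ` S) \<and> 1 \<le> card (\<phi> ` S) \<and> card (\<phi> ` S) \<le> card S"
    by (simp add: S_def Suc_le_eq card_gt_0_iff card_image_le)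
  moreover have "card (\<phi> ` S) < card S \<longleftrightarrow> \<not> inj_on \<phi> S"
    using fin by (simp add: S_def inj_on_iff_card_image_less)
  moreover have "\<not> inj_on \<phi> S \<longleftrightarrow> (\<exists>x0 x1. x0 \<in> S \<and> x1 \<in> S \<and> x0 \<noteq> x1 \<and>
                   (\<exists>j::int. x0 - x1 = 2 * pi * of_int j / real k))"
    unfolding inj_on_def \<phi>_def wrap_angle_mult_eq_iff[OF k] by blast
  ultimately show ?thesis
    unfolding SY S_def by blast
qed

end
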